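(* Let $q$ be a prime power, $d\ge5$, $\mathcal C$ the $[q+1,q+2-d,d]_q$ normalized GDRS code, and $\mathcal V^{(2)}$ a coset of weight $2$ of $\mathcal C$ with leader $\mathbf v_2(j_1,j_2;\gamma_1,\gamma_2)$. Let $\beta$ be a primitive element of $\mathbb F_q$, $\gamma=-\gamma_2/\gamma_1$, and $\lambda(\gamma)\in\mathbb Z_{q-1}$ with $\beta^{\lambda(\gamma)}=\gamma$. Write $P=\mathrm P^+_{q-1,d-2}(\lambda(\gamma))$ (with $t$ an integer). Then: (1) $q=3t+1\ge7$, $d=5$: $P=\frac13\left(\binom{q-2}{2}-1\right)+1$ if $\lambda(\gamma)\equiv0\pmod3$, else $P=\frac13\left(\binom{q-2}{2}-1\right)$. (2) $q=4t+3\ge7$, $d=6$: $P=\frac14\left(\binom{q-2}{3}+\frac{q-3}{2}\right)$ if $\lambda(\gamma)\equiv0\pmod2$, else $P=\frac14\left(\binom{q-2}{3}-\frac{q-3}{2}\right)$. (3) $q=5t+1\ge11$, $d=7$: $P=\frac15\left(\binom{q-2}{4}-1\right)+1$ if $\lambda(\gamma)\equiv0\pmod5$, else $P=\frac15\left(\binom{q-2}{4}-1\right)$. (4) $q=6t+3\ge9$ or $q=6t+5\ge11$, $d=8$: $P=\frac16\left(\binom{q-2}{5}-\binom{(q-3)/2}{2}\right)$ if $\lambda(\gamma)\equiv0\pmod2$, else $P=\frac16\left(\binom{q-2}{5}+\binom{(q-3)/2}{2}\right)$. (5) $q=6t+4\ge10$, $d=8$: $P=\frac13\left(\frac12\binom{q-2}{5}+\frac{q-4}{3}\right)$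 if $\lambda(\gamma)\equiv0\pmod3$, else $P=\frac16\left(\binom{q-2}{5}-\frac{q-4}{3}\right)$. (6) $q=7t+1\ge29$, $d=9$: $P=\frac17\left(\binom{q-2}{6}-1\right)+1$ if $\lambda(\gamma)\equiv0\pmod7$, else $P=\frac17\left(\binom{q-2}{6}-1\right)$. (7) $q=4t+7\ge11$, $d=10$: $P=\frac18\left(\binom{q-2}{7}+\binom{(q-3)/2}{3}\right)$ if $\lambda(\gamma)\equiv0\pmod2$, else $P=\frac18\left(\binom{q-2}{7}-\binom{(q-3)/2}{3}\right)$. (8) $q=9t+4\ge13$ or $q=9t+7\ge16$, $d=11$: $P=\frac19\left(\binom{q-2}{8}+2\binom{(q-4)/3}{2}\right)$ if $\lambda(\gamma)\equiv0\pmod3$, else $P=\frac19\left(\binom{q-2}{8}-\binom{(q-4)/3}{2}\right)$. (9) $q=4t+1\ge9$, $d=6$: $P=\frac14\left(\binom{q-2}{3}+\frac{q-7}{2}\right)$ if $\lambda(\gamma)\equiv0\pmod4$; $P=\frac14\left(\binom{q-2}{3}-\frac{q-3}{2}\right)$ if $\lambda(\gamma)\equiv1\pmod2$; $P=\frac14\left(\binom{q-2}{3}+\frac{q+1}{2}\right)$ if $\lambda(\gamma)\equiv2\pmod4$.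
   Context: Normalized GDRS code: the $\mathbb F_q$-linear code of length $q+1$ which is the kernel of the $(d-1)\times(q+1)$ matrix whose first $q$ columns are $(1,m,\dots,m^{d-2})^T$, $m$ running over $\mathbb F_q$, and whose last column is $(0,\dots,0,1)^T$. A coset of weight $2$ is a coset of minimum Hamming weight $2$; $\mathbf v_2(j_1,j_2;\gamma_1,\gamma_2)$ is the vector with $\gamma_1,\gamma_2\in\mathbb F_q^*$ in positions $j_1\ne j_2$ and zeros elsewhere. For positive integers $\mu<R$ and $\lambda\in\mathbb Z_R$ (integers mod $R$), $\mathrm P^+_{R,\mu}(\lambda)$ is the number of $\mu$-element subsets of $\mathbb Z_R$ (distinct elements) whose sum in $\mathbb Z_R$ is $\lambda$. (By the paper's results, $P$ equals the number of weight-$(d-2)$ vectors in $\mathcal V^{(2)}$.) *)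

theory Defs
  imports Complex_Main "HOL-Library.Cardinality"
begin

text \<open>Positions of codewords of length q+1: Some m for m in F_q (the first q columns),
  None for the last column.\<close>

definition gdrs_code :: "nat \<Rightarrow> ('a::{finite,field} option \<Rightarrow> 'a) set" where
  "gdrs_code d = {x. \<forall>i < d - 1.
      (\<Sum>m\<in>(UNIV::'a set). x (Some m) * m ^ i) + (if i = d - 2 then x None else 0) = 0}"

definition hamming_wt :: "('b \<Rightarrow> 'a::zero) \<Rightarrow> nat" where
  "hamming_wt x = card {j. x j \<noteq> 0}"

definition is_coset :: "('b \<Rightarrow> 'a::plus) set \<Rightarrow> ('b \<Rightarrow> 'a) set \<Rightarrow> bool" where
  "is_coset C V \<longleftrightarrow> (\<exists>x. V = (\<lambda>c. \<lambda>j. x j + c j) ` C)"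

definition coset_weight :: "('b \<Rightarrow> 'a::zero) set \<Rightarrow> nat" where
  "coset_weight V = Min (hamming_wt ` V)"

definition is_coset_leader :: "('b \<Rightarrow> 'a::zero) \<Rightarrow> ('b \<Rightarrow> 'a) set \<Rightarrow> bool" where
  "is_coset_leader v V \<longleftrightarrow> v \<in> V \<and> hamming_wt v = coset_weight V"

definition v2 :: "'b \<Rightarrow> 'b \<Rightarrow> 'a \<Rightarrow> 'a \<Rightarrow> ('b \<Rightarrow> 'a::zero)" where
  "v2 j1 j2 g1 g2 = (\<lambda>j. if j = j1 then g1 else if j = j2 then g2 else 0)"

definition primitive_elem :: "'a::field \<Rightarrow> bool" where
  "primitive_elem \<beta> \<longleftrightarrow> \<beta> \<noteq> 0 \<and> (\<forall>x. x \<noteq> 0 \<longrightarrow> (\<exists>k::nat. \<beta> ^ k = x))"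

text \<open>P^+_{R,mu}(lambda): number of mu-element subsets of Z_R = {0..<R} with sum = lambda in Z_R.\<close>
definition Pplus :: "nat \<Rightarrow> nat \<Rightarrow> nat \<Rightarrow> nat" where
  "Pplus R \<mu> l = card {S. S \<subseteq> {..<R} \<and> card S = \<mu> \<and> (\<Sum>S) mod R = l mod R}"

end

theory Submission
  imports Defs "HOL-Number_Theory.Cong"
begin

text \<open>Let N(n, k, r) count the k-subsets of {0, ..., n - 1} whose sum is r modulo n. Translating a
  subset by a changes its sum by k a, so N(n, k, r) only depends on r modulo g = gcd n k, and counting
  sums modulo g merely adds up n / g equal values of N.

  For n = p m and k = p i, cut {0, ..., n - 1} into the m blocks of p consecutive numbers. Rotating
  a block cyclically changes the sum modulo p by a multiple of the number of points the subset has in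
  that block. When p is prime, this makes the subsets that meet some block partially equidistributed
  modulo p; the other subsets are unions of i whole blocks, all with sum i p (p - 1) / 2 modulo p.
  Since gcd n k = p in cases (1)-(8), this determines N. In case (9), where gcd n k = 4, the count
  modulo 2, the reflection x \<mapsto> n - 1 - x (exchanging the residues 1 and 3 modulo 4) and rotations
  by the shift 2 (which work for every block count) together determine the four counts modulo 4.\<close>

section \<open>Counting by residues\<close>

lemma card_cong_fibres_shift:
  fixes f :: "'a \<Rightarrow> nat"
  assumes fin: "finite X" and inj: "inj_on \<psi> X" and into: "\<psi> ` X \<subseteq> X"
    and shift: "\<And>x. x \<in> X \<Longrightarrow> [f (\<psi> x) = f x + \<delta>] (mod M)"
  shows "card {x\<in>X. [f x = r] (mod M)} = card {x\<in>X. [f x = r + t * \<delta>] (mod M)}"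
proof (induction t)
  case (Suc t)
  have onto: "\<psi> ` X = X" by (rule endo_inj_surj[OF fin into inj])
  have fibre_image: "\<psi> ` {x\<in>X. [f x = s] (mod M)} = {x\<in>X. [f x = s + \<delta>] (mod M)}" for s
  proof (intro equalityI subsetI)
    fix y assume "y \<in> \<psi> ` {x\<in>X. [f x = s] (mod M)}"
    then obtain x where x: "x \<in> X" "[f x = s] (mod M)" and y: "y = \<psi> x" by blast
    have "[f y = f x + \<delta>] (mod M)" using shift[OF x(1)] y by simp
    also have "[f x + \<delta> = s + \<delta>] (mod M)" using x(2) by (simp add: cong_add_rcancel_nat)
    finally show "y \<in> {x\<in>X. [f x = s + \<delta>] (mod M)}" using into x(1) y by auto
  next
    fix y assume y: "y \<in> {x\<in>X. [f x = s + \<delta>] (mod M)}"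
    then obtain x where x: "x \<in> X" "y = \<psi> x" using onto by blast
    have "[f x + \<delta> = f y] (mod M)" using shift[OF x(1)] x(2) by (simp add: cong_sym)
    also have "[f y = s + \<delta>] (mod M)" using y by simp
    finally have "[f x = s] (mod M)" by (simp add: cong_add_rcancel_nat)
    then show "y \<in> \<psi> ` {x\<in>X. [f x = s] (mod M)}" using x by blast
  qed
  have "inj_on \<psi> {x\<in>X. [f x = s] (mod M)}" for s
    using inj by (rule inj_on_subset) blast
  then have step: "card {x\<in>X. [f x = s] (mod M)} = card {x\<in>X. [f x = s + \<delta>] (mod M)}" for s
    by (simp add: card_image flip: fibre_image)
  show ?case using Suc.IH step[of "r + t * \<delta>"] by (simp add: ac_simps)
qed simp

lemma card_cong_fibres_sum:
  fixes f :: "'a \<Rightarrow> nat"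
  assumes "finite X" "0 < M" "g dvd M"
  shows "card {x\<in>X. [f x = r] (mod g)} = (\<Sum>s | s < M \<and> [s = r] (mod g). card {x\<in>X. [f x = s] (mod M)})"
proof -
  have "{x\<in>X. [f x = r] (mod g)} = (\<Union>s \<in> {s. s < M \<and> [s = r] (mod g)}. {x\<in>X. [f x = s] (mod M)})"
  proof (intro equalityI subsetI)
    fix x assume x: "x \<in> {x\<in>X. [f x = r] (mod g)}"
    have "[f x mod M = f x] (mod g)"
      using assms(3) by (simp add: cong_def mod_mod_cancel)
    then have "f x mod M \<in> {s. s < M \<and> [s = r] (mod g)}"
      using x assms(2) cong_trans by auto
    moreover have "x \<in> {x\<in>X. [f x = f x mod M] (mod M)}"
      using x by (simp add: cong_def)
    ultimately show "x \<in> (\<Union>s \<in> {s. s < M \<and> [s = r] (mod g)}. {x\<in>X. [f x = s] (mod M)})"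
      by blast
  next
    fix x assume "x \<in> (\<Union>s \<in> {s. s < M \<and> [s = r] (mod g)}. {x\<in>X. [f x = s] (mod M)})"
    then obtain s where "x \<in> X" "[f x = s] (mod M)" "[s = r] (mod g)" by blast
    then show "x \<in> {x\<in>X. [f x = r] (mod g)}"
      using assms(3) cong_dvd_modulus_nat cong_trans by blast
  qed
  also have "card \<dots> = (\<Sum>s | s < M \<and> [s = r] (mod g). card {x\<in>X. [f x = s] (mod M)})"
    by (rule card_UN_disjoint) (use assms(1) in \<open>auto simp: cong_def\<close>)
  finally show ?thesis .
qed

lemma card_cong_class_lessThan:
  fixes g n r :: nat
  assumes "0 < g" "g dvd n"
  shows "card {s. s < n \<and> [s = r] (mod g)} = n div g"
proof -
  have "{s. s < n \<and> [s = r] (mod g)} = (\<lambda>j. r mod g + g * j) ` {..<n div g}"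
  proof (intro equalityI subsetI)
    fix s assume s: "s \<in> {s. s < n \<and> [s = r] (mod g)}"
    then have "s = r mod g + g * (s div g)"
      by (metis cong_def mem_Collect_eq mod_mult_div_eq)
    moreover have "s div g < n div g"
      using s assms by (simp add: div_less_iff_less_mult)
    ultimately show "s \<in> (\<lambda>j. r mod g + g * j) ` {..<n div g}" by blast
  next
    fix s assume "s \<in> (\<lambda>j. r mod g + g * j) ` {..<n div g}"
    then obtain j where j: "j < n div g" "s = r mod g + g * j" by blast
    have "g * Suc j \<le> g * (n div g)"
      using j(1) by (intro mult_le_mono2) simp
    then have "g * j + g \<le> n"
      using assms(2) by simp
    moreover have "r mod g < g"
      using assms(1) by simp
    ultimately show "s \<in> {s. s < n \<and> [s = r] (mod g)}"
      using j by (simp add: cong_def)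
  qed
  moreover have "inj_on (\<lambda>j. r mod g + g * j) {..<n div g}"
    using assms(1) by (auto intro!: inj_onI)
  ultimately show ?thesis by (simp add: card_image)
qed

section \<open>Subset sums modulo n\<close>

definition subset_sum_count :: "nat \<Rightarrow> nat \<Rightarrow> nat \<Rightarrow> nat \<Rightarrow> nat" where
  "subset_sum_count n k M r = card {S. S \<subseteq> {..<n} \<and> card S = k \<and> [\<Sum>S = r] (mod M)}"

lemma Pplus_eq_subset_sum_count: "Pplus R \<mu> l = subset_sum_count R \<mu> R l"
  by (simp add: Pplus_def subset_sum_count_def cong_def)

lemma finite_subsets_lessThan: "finite {S. S \<subseteq> {..<n::nat} \<and> P S}"
  by (rule finite_subset[of _ "Pow {..<n}"]) auto

lemma subset_sum_count_dvd_modulus: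
  assumes "0 < M" "g dvd M"
  shows "subset_sum_count n k g r = (\<Sum>s | s < M \<and> [s = r] (mod g). subset_sum_count n k M s)"
  using card_cong_fibres_sum[OF finite_subsets_lessThan assms, of n "\<lambda>S. card S = k" Sum r]
  by (simp add: subset_sum_count_def conj_assoc)

lemma subset_sum_count_cong_gcd:
  assumes n: "0 < n" and r: "[r = r'] (mod gcd n k)"
  shows "subset_sum_count n k n r = subset_sum_count n k n r'"
proof -
  define X where "X = {S. S \<subseteq> {..<n} \<and> card S = k}"
  obtain a where a: "[k * a = gcd n k] (mod n)"
    using cong_solve_nat[of k n] by (auto simp: gcd.commute)
  define \<tau> where "\<tau> x = (x + a) mod n" for x
  have \<tau>_inj: "inj_on \<tau> {..<n}"
  proof (rule inj_onI)
    fix x y assume "x \<in> {..<n}" "y \<in> {..<n}" "\<tau> x = \<tau> y"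
    then show "x = y"
      unfolding \<tau>_def by (metis cong_def cong_add_rcancel_nat cong_less_modulus_unique_nat lessThan_iff)
  qed
  have \<tau>_into: "\<tau> ` {..<n} \<subseteq> {..<n}"
    using n by (auto simp: \<tau>_def)
  have "card {S\<in>X. [\<Sum>S = s] (mod n)} = card {S\<in>X. [\<Sum>S = s + t * gcd n k] (mod n)}" for s t
  proof (rule card_cong_fibres_shift)
    show "finite X"
      unfolding X_def by (rule finite_subsets_lessThan)
    show "inj_on (image \<tau>) X"
      unfolding X_def by (rule inj_on_subset[OF inj_on_image_Pow[OF \<tau>_inj]]) auto
    show "image \<tau> ` X \<subseteq> X"
      using \<tau>_into by (auto simp: X_def card_image inj_on_subset[OF \<tau>_inj])
    fix S assume "S \<in> X"
    then have S: "S \<subseteq> {..<n}" "card S = k" by (simp_all add: X_def)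
    have "inj_on \<tau> S"
      using \<tau>_inj S(1) by (rule inj_on_subset)
    then have "\<Sum>(\<tau> ` S) = (\<Sum>x\<in>S. \<tau> x)"
      by (simp add: sum.reindex)
    also have "[\<dots> = (\<Sum>x\<in>S. x + a)] (mod n)"
      by (rule cong_sum) (simp add: \<tau>_def cong_def)
    also have "(\<Sum>x\<in>S. x + a) = \<Sum>S + k * a"
      using S(2) by (simp add: sum.distrib)
    also have "[\<dots> = \<Sum>S + gcd n k] (mod n)"
      using a by (rule cong_add_lcancel_nat[THEN iffD2])
    finally show "[\<Sum>(\<tau> ` S) = \<Sum>S + gcd n k] (mod n)" .
  qed
  then have translate: "subset_sum_count n k n s = subset_sum_count n k n (s + t * gcd n k)" for s t
    by (simp add: subset_sum_count_def X_def conj_assoc)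
  have reduce: "subset_sum_count n k n s = subset_sum_count n k n (s mod gcd n k)" for s
    using translate[of "s mod gcd n k" "s div gcd n k"] by (metis mod_div_mult_eq)
  show ?thesis
    using reduce[of r] reduce[of r'] r by (simp add: cong_def)
qed

lemma subset_sum_count_gcd_modulus:
  assumes n: "0 < n"
  shows "subset_sum_count n k (gcd n k) r = (n div gcd n k) * subset_sum_count n k n r"
proof -
  have "subset_sum_count n k (gcd n k) r
      = (\<Sum>s | s < n \<and> [s = r] (mod gcd n k). subset_sum_count n k n s)"
    using n by (intro subset_sum_count_dvd_modulus) auto
  also have "\<dots> = (\<Sum>s | s < n \<and> [s = r] (mod gcd n k). subset_sum_count n k n r)"
    by (rule sum.cong) (auto intro: subset_sum_count_cong_gcd[OF n])
  also have "\<dots> = (n div gcd n k) * subset_sum_count n k n r"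
    using n by (simp add: card_cong_class_lessThan)
  finally show ?thesis .
qed

lemma subset_sum_count_reflect:
  assumes "[r + r' = k * (n - 1)] (mod M)"
  shows "subset_sum_count n k M r = subset_sum_count n k M r'"
proof -
  define A where "A s = {S. S \<subseteq> {..<n} \<and> card S = k \<and> [\<Sum>S = s] (mod M)}" for s
  define \<sigma> where "\<sigma> x = n - 1 - x" for x
  have \<sigma>_inj: "inj_on \<sigma> {..<n}"
    by (rule inj_onI) (auto simp: \<sigma>_def)
  have le: "card (A s) \<le> card (A s')" if ss': "[s + s' = k * (n - 1)] (mod M)" for s s'
  proof (rule card_inj_on_le[of "image \<sigma>"])
    show "inj_on (image \<sigma>) (A s)"
      unfolding A_def by (rule inj_on_subset[OF inj_on_image_Pow[OF \<sigma>_inj]]) auto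
    show "finite (A s')"
      unfolding A_def by (rule finite_subsets_lessThan)
    show "image \<sigma> ` A s \<subseteq> A s'"
    proof clarify
      fix S assume "S \<in> A s"
      then have S: "S \<subseteq> {..<n}" "card S = k" "[\<Sum>S = s] (mod M)" by (simp_all add: A_def)
      have inj: "inj_on \<sigma> S"
        using \<sigma>_inj S(1) by (rule inj_on_subset)
      have "\<Sum>(\<sigma> ` S) + \<Sum>S = (\<Sum>x\<in>S. \<sigma> x + x)"
        by (simp add: sum.reindex[OF inj] sum.distrib)
      also have "\<dots> = (\<Sum>x\<in>S. n - 1)"
        using S(1) by (intro sum.cong) (auto simp: \<sigma>_def)
      also have "\<dots> = k * (n - 1)"
        using S(2) by simp
      finally have "[\<Sum>(\<sigma> ` S) + s = s' + s] (mod M)"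
        using S(3) ss' by (metis add.commute cong_add_lcancel_nat cong_sym cong_trans)
      then have "[\<Sum>(\<sigma> ` S) = s'] (mod M)"
        by (simp add: cong_add_rcancel_nat)
      moreover have "\<sigma> ` S \<subseteq> {..<n}"
        using S(1) by (auto simp: \<sigma>_def)
      moreover have "card (\<sigma> ` S) = k"
        using S(2) inj by (simp add: card_image)
      ultimately show "\<sigma> ` S \<in> A s'"
        by (simp add: A_def)
    qed
  qed
  show ?thesis
    using le[OF assms] le[of r' r] assms by (simp add: A_def subset_sum_count_def add.commute)
qed

section \<open>Blocks of p consecutive numbers\<close>

definition block_count :: "nat \<Rightarrow> nat set \<Rightarrow> nat \<Rightarrow> nat" where
  "block_count p S b = card {x\<in>S. x div p = b}"

definition block_rotate :: "nat \<Rightarrow> nat \<Rightarrow> nat \<Rightarrow> nat \<Rightarrow> nat" where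
  "block_rotate p b c x = (if x div p = b then p * b + (x + c) mod p else x)"

definition block_union :: "nat \<Rightarrow> nat set \<Rightarrow> nat set" where
  "block_union p T = {x. x div p \<in> T}"

lemma block_eq_image: "0 < p \<Longrightarrow> {x::nat. x div p = b} = (\<lambda>t. p * b + t) ` {..<p}"
  by (auto simp: image_iff) (metis lessThan_iff mod_less_divisor mult_div_mod_eq)

lemma card_block: "0 < p \<Longrightarrow> card {x::nat. x div p = b} = p"
  by (simp add: block_eq_image card_image)

lemma finite_block: "0 < p \<Longrightarrow> finite {x::nat. x div p = b}"
  by (simp add: block_eq_image)

lemma sum_block_cong: "0 < p \<Longrightarrow> [\<Sum>{x::nat. x div p = b} = (\<Sum>t<p. t)] (mod p)"
  by (simp add: block_eq_image sum.reindex sum.distrib cong_def)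

lemma block_count_le: "0 < p \<Longrightarrow> block_count p S b \<le> p"
  unfolding block_count_def
  by (metis (no_types, lifting) card_block card_mono finite_block mem_Collect_eq subsetI)

lemma block_rotate_div: "0 < p \<Longrightarrow> block_rotate p b c x div p = x div p"
  by (simp add: block_rotate_def)

lemma block_rotate_cong:
  "0 < p \<Longrightarrow> [block_rotate p b c x = x + (if x div p = b then c else 0)] (mod p)"
  by (simp add: block_rotate_def cong_def mod_add_left_eq)

lemma inj_block_rotate:
  assumes "0 < p" shows "inj (block_rotate p b c)"
proof (rule injI)
  fix x y assume eq: "block_rotate p b c x = block_rotate p b c y"
  then have div: "x div p = y div p"
    by (metis block_rotate_div[OF assms])
  have "[x + (if x div p = b then c else 0) = y + (if x div p = b then c else 0)] (mod p)"
    using block_rotate_cong[OF assms, of b c x] block_rotate_cong[OF assms, of b c y] eq div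
    by (metis cong_sym cong_trans)
  then have "x mod p = y mod p"
    unfolding cong_add_rcancel_nat by (simp add: cong_def)
  with div show "x = y"
    by (metis div_mult_mod_eq)
qed

lemma block_count_block_rotate_image:
  assumes "0 < p" shows "block_count p (block_rotate p b c ` S) = block_count p S"
proof
  fix b'
  have "{y \<in> block_rotate p b c ` S. y div p = b'} = block_rotate p b c ` {x\<in>S. x div p = b'}"
    using block_rotate_div[OF assms] by auto
  then show "block_count p (block_rotate p b c ` S) b' = block_count p S b'"
    unfolding block_count_def
    by (simp add: card_image inj_on_subset[OF inj_block_rotate[OF assms]])
qed

lemma sum_block_rotate_image_cong:
  assumes "0 < p" "finite S"
  shows "[\<Sum>(block_rotate p b c ` S) = \<Sum>S + c * block_count p S b] (mod p)"
proof -
  have "\<Sum>(block_rotate p b c ` S) = (\<Sum>x\<in>S. block_rotate p b c x)"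
    by (simp add: sum.reindex inj_on_subset[OF inj_block_rotate[OF assms(1)]])
  also have "[\<dots> = (\<Sum>x\<in>S. x + (if x div p = b then c else 0))] (mod p)"
    by (rule cong_sum) (rule block_rotate_cong[OF assms(1)])
  also have "(\<Sum>x\<in>S. x + (if x div p = b then c else 0)) = \<Sum>S + c * block_count p S b"
    using assms(2) by (simp add: sum.distrib sum.If_cases block_count_def Int_def mult.commute)
  finally show ?thesis .
qed

definition partial_block_sets :: "nat \<Rightarrow> nat \<Rightarrow> nat \<Rightarrow> nat set set" where
  "partial_block_sets p m k = {S. S \<subseteq> {..<p * m} \<and> card S = k \<and>
     (\<exists>b. 0 < block_count p S b \<and> block_count p S b < p)}"

lemma block_rotate_image_partial_block_sets:
  assumes "0 < p" "S \<in> partial_block_sets p m k"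
  shows "block_rotate p b c ` S \<in> partial_block_sets p m k"
proof -
  have "block_rotate p b c x < p * m" if "x \<in> S" for x
  proof -
    have "x < m * p"
      using assms(2) that by (auto simp: partial_block_sets_def mult.commute)
    then have "block_rotate p b c x div p < m"
      by (simp add: block_rotate_div assms(1) div_less_iff_less_mult)
    then show ?thesis
      by (simp add: assms(1) div_less_iff_less_mult mult.commute)
  qed
  moreover have "card (block_rotate p b c ` S) = card S"
    by (simp add: card_image inj_on_subset[OF inj_block_rotate[OF assms(1)]])
  ultimately show ?thesis
    using assms by (auto simp: partial_block_sets_def block_count_block_rotate_image)
qed

lemma partial_block_sets_shift:
  fixes m k :: nat
  assumes p: "0 < p" and \<delta>: "\<And>c. 0 < c \<Longrightarrow> c < p \<Longrightarrow> gcd c p dvd \<delta>"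
  defines "X \<equiv> partial_block_sets p m k"
  shows "card {S\<in>X. [\<Sum>S = r] (mod p)} = card {S\<in>X. [\<Sum>S = r + t * \<delta>] (mod p)}"
proof (rule card_cong_fibres_shift)
  \<comment> \<open>The rotation applied to S depends only on the block counts of S, which rotations
    preserve; this is what makes it injective.\<close>
  define sel where "sel \<pi> = (SOME (b, c). 0 < \<pi> b \<and> \<pi> b < p \<and> [c * \<pi> b = \<delta>] (mod p))"
    for \<pi> :: "nat \<Rightarrow> nat"
  define \<psi> where "\<psi> S = (case sel (block_count p S) of (b, c) \<Rightarrow> block_rotate p b c ` S)" for S
  have sel: "case sel (block_count p S) of (b, c) \<Rightarrow> [c * block_count p S b = \<delta>] (mod p)"
    if S: "S \<in> X" for S
  proof -
    obtain b where b: "0 < block_count p S b" "block_count p S b < p"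
      using S by (auto simp: X_def partial_block_sets_def)
    then obtain c where "[block_count p S b * c = \<delta>] (mod p)"
      using cong_solve_dvd_nat \<delta> by blast
    then have "\<exists>bc. case bc of (b, c) \<Rightarrow> 0 < block_count p S b \<and> block_count p S b < p \<and>
        [c * block_count p S b = \<delta>] (mod p)"
      using b by (auto simp: mult.commute)
    then show ?thesis
      unfolding sel_def by (rule someI_ex[THEN case_prodE]) auto
  qed
  show "finite X"
    unfolding X_def partial_block_sets_def by (rule finite_subsets_lessThan)
  show "\<psi> ` X \<subseteq> X"
    using block_rotate_image_partial_block_sets[OF p] by (auto simp: X_def \<psi>_def split: prod.split)
  have counts: "block_count p (\<psi> S) = block_count p S" for S
    by (simp add: \<psi>_def block_count_block_rotate_image[OF p] split: prod.split)
  show "inj_on \<psi> X"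
  proof (rule inj_onI)
    fix S T assume "\<psi> S = \<psi> T"
    moreover from this have "sel (block_count p S) = sel (block_count p T)"
      using counts by metis
    ultimately show "S = T"
      using inj_block_rotate[OF p] by (auto simp: \<psi>_def inj_image_eq_iff split: prod.splits)
  qed
  fix S assume S: "S \<in> X"
  then have "finite S"
    by (auto simp: X_def partial_block_sets_def intro: finite_subset)
  obtain b c where bc: "sel (block_count p S) = (b, c)"
    by fastforce
  have "[\<Sum>(\<psi> S) = \<Sum>S + c * block_count p S b] (mod p)"
    using sum_block_rotate_image_cong[OF p \<open>finite S\<close>] bc by (simp add: \<psi>_def)
  also have "[\<Sum>S + c * block_count p S b = \<Sum>S + \<delta>] (mod p)"
    using sel[OF S] bc by (simp add: cong_add_lcancel_nat)
  finally show "[\<Sum>(\<psi> S) = \<Sum>S + \<delta>] (mod p)" .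
qed

lemma block_union_eq_UN: "block_union p T = (\<Union>b\<in>T. {x. x div p = b})"
  by (auto simp: block_union_def)

lemma card_block_union: "0 < p \<Longrightarrow> finite T \<Longrightarrow> card (block_union p T) = p * card T"
  unfolding block_union_eq_UN by (subst card_UN_disjoint) (auto simp: finite_block card_block)

lemma sum_block_union_cong:
  assumes "0 < p" "finite T"
  shows "[\<Sum>(block_union p T) = card T * (\<Sum>t<p. t)] (mod p)"
proof -
  have "\<Sum>(block_union p T) = (\<Sum>b\<in>T. \<Sum>{x. x div p = b})"
    unfolding block_union_eq_UN using assms by (subst sum.UNION_disjoint) (auto simp: finite_block)
  also have "[\<dots> = (\<Sum>b\<in>T. \<Sum>t<p. t)] (mod p)"
    by (rule cong_sum) (rule sum_block_cong[OF assms(1)])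
  finally show ?thesis by simp
qed

lemma block_count_block_union:
  assumes "0 < p"
  shows "block_count p (block_union p T) b = (if b \<in> T then p else 0)"
proof -
  have "{x\<in>block_union p T. x div p = b} = (if b \<in> T then {x. x div p = b} else {})"
    by (auto simp: block_union_def)
  then show ?thesis
    by (simp add: block_count_def card_block[OF assms])
qed

lemma inj_block_union:
  assumes "0 < p" shows "inj (block_union p)"
proof (rule injI)
  fix T T' assume eq: "block_union p T = block_union p T'"
  have "b \<in> T \<longleftrightarrow> p * b \<in> block_union p T" for b T
    using assms by (simp add: block_union_def)
  then show "T = T'"
    using eq by blast
qed

lemma block_union_div_image:
  assumes p: "0 < p" and full: "\<And>b. block_count p S b = 0 \<or> block_count p S b = p"
  shows "block_union p ((\<lambda>x. x div p) ` S) = S"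
proof (intro equalityI subsetI)
  fix x assume "x \<in> block_union p ((\<lambda>x. x div p) ` S)"
  then obtain y where y: "y \<in> S" "y div p = x div p"
    by (auto simp: block_union_def)
  have "finite {z\<in>S. z div p = x div p}"
    using finite_block[OF p] by (rule rev_finite_subset) blast
  then have "block_count p S (x div p) \<noteq> 0"
    using y by (auto simp: block_count_def)
  then have "card {z\<in>S. z div p = x div p} = card {z. z div p = x div p}"
    using full[of "x div p"] by (simp add: block_count_def card_block[OF p])
  then have "{z\<in>S. z div p = x div p} = {z. z div p = x div p}"
    by (intro card_subset_eq finite_block[OF p]) auto
  then show "x \<in> S" by blast
qed (auto simp: block_union_def)

lemma subsets_eq_partial_block_sets_Un_block_unions:
  assumes p: "0 < p"
  shows "{S. S \<subseteq> {..<p * m} \<and> card S = p * i}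
    = partial_block_sets p m (p * i) \<union> block_union p ` {T. T \<subseteq> {..<m} \<and> card T = i}"
proof (intro equalityI subsetI)
  fix S assume "S \<in> {S. S \<subseteq> {..<p * m} \<and> card S = p * i}"
  then have S: "S \<subseteq> {..<p * m}" "card S = p * i" by auto
  show "S \<in> partial_block_sets p m (p * i) \<union> block_union p ` {T. T \<subseteq> {..<m} \<and> card T = i}"
  proof (cases "S \<in> partial_block_sets p m (p * i)")
    case False
    then have "block_count p S b = 0 \<or> block_count p S b = p" for b
      using S block_count_le[OF p, of S b] by (auto simp: partial_block_sets_def)
    then have S_eq: "S = block_union p T" if "T = (\<lambda>x. x div p) ` S" for T
      using block_union_div_image[OF p] that by metis
    define T where "T = (\<lambda>x. x div p) ` S"
    have T: "T \<subseteq> {..<m}"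
      using S(1) p by (auto simp: T_def div_less_iff_less_mult mult.commute)
    have "p * card T = p * i"
      using card_block_union[OF p finite_subset[OF T finite_lessThan]] S(2) S_eq[OF T_def] by simp
    then have "card T = i"
      using p by simp
    with T S_eq[OF T_def] show ?thesis by blast
  qed simp
next
  fix S assume "S \<in> partial_block_sets p m (p * i) \<union> block_union p ` {T. T \<subseteq> {..<m} \<and> card T = i}"
  then consider "S \<in> partial_block_sets p m (p * i)"
    | T where "T \<subseteq> {..<m}" "card T = i" "S = block_union p T"
    by blast
  then show "S \<in> {S. S \<subseteq> {..<p * m} \<and> card S = p * i}"
  proof cases
    case 1
    then show ?thesis by (simp add: partial_block_sets_def)
  next
    case 2
    have "block_union p T \<subseteq> {..<p * m}"
      using 2(1) p by (auto simp: block_union_def div_less_iff_less_mult mult.commute[of m])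
    moreover have "card (block_union p T) = p * i"
      using card_block_union[OF p finite_subset[OF 2(1) finite_lessThan]] 2(2) by simp
    ultimately show ?thesis
      using 2(3) by simp
  qed
qed

lemma block_union_notin_partial_block_sets: "0 < p \<Longrightarrow> block_union p T \<notin> partial_block_sets p m k"
  by (simp add: partial_block_sets_def block_count_block_union)

lemma card_block_unions:
  assumes "0 < p"
  shows "card (block_union p ` {T. T \<subseteq> {..<m} \<and> card T = i}) = m choose i"
  by (simp add: card_image inj_on_subset[OF inj_block_union[OF assms]] n_subsets)

lemma card_block_unions_sum_cong:
  fixes m i :: nat
  assumes p: "0 < p"
  defines "B \<equiv> block_union p ` {T. T \<subseteq> {..<m} \<and> card T = i}"
  shows "card {S\<in>B. [\<Sum>S = r] (mod p)} = (if [r = i * (\<Sum>t<p. t)] (mod p) then m choose i else 0)"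
proof -
  have B_sum: "[\<Sum>S = i * (\<Sum>t<p. t)] (mod p)" if "S \<in> B" for S
  proof -
    from that obtain T where T: "T \<subseteq> {..<m}" "card T = i" "S = block_union p T"
      by (auto simp: B_def)
    then show ?thesis
      using sum_block_union_cong[OF p finite_subset[OF T(1) finite_lessThan]] by simp
  qed
  have "{S\<in>B. [\<Sum>S = r] (mod p)} = (if [r = i * (\<Sum>t<p. t)] (mod p) then B else {})"
    using B_sum by (auto intro: cong_trans cong_sym)
  then show ?thesis
    using card_block_unions[OF p] by (simp add: B_def)
qed

lemma card_partial_block_sets:
  assumes p: "0 < p"
  shows "card (partial_block_sets p m (p * i)) + (m choose i) = (p * m) choose (p * i)"
proof -
  define B where "B = block_union p ` {T. T \<subseteq> {..<m} \<and> card T = i}"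
  have "(p * m) choose (p * i) = card {S. S \<subseteq> {..<p * m} \<and> card S = p * i}"
    by (simp add: n_subsets)
  also have "\<dots> = card (partial_block_sets p m (p * i) \<union> B)"
    unfolding B_def by (simp add: subsets_eq_partial_block_sets_Un_block_unions[OF p])
  also have "\<dots> = card (partial_block_sets p m (p * i)) + card B"
  proof (rule card_Un_disjoint)
    show "finite (partial_block_sets p m (p * i))"
      unfolding partial_block_sets_def by (rule finite_subsets_lessThan)
    show "finite B"
      by (simp add: B_def finite_subsets_lessThan)
    show "partial_block_sets p m (p * i) \<inter> B = {}"
      using block_union_notin_partial_block_sets[OF p] by (auto simp: B_def)
  qed
  also have "card B = m choose i"
    unfolding B_def by (rule card_block_unions[OF p])
  finally show ?thesis
    by (rule sym)
qed

lemma subset_sum_count_blocks: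
  assumes p: "0 < p"
  shows "subset_sum_count (p * m) (p * i) p r
    = card {S\<in>partial_block_sets p m (p * i). [\<Sum>S = r] (mod p)}
      + (if [r = i * (\<Sum>t<p. t)] (mod p) then m choose i else 0)"
proof -
  define B where "B = block_union p ` {T. T \<subseteq> {..<m} \<and> card T = i}"
  have "{S. S \<subseteq> {..<p * m} \<and> card S = p * i \<and> [\<Sum>S = r] (mod p)}
      = {S\<in>{S. S \<subseteq> {..<p * m} \<and> card S = p * i}. [\<Sum>S = r] (mod p)}"
    by blast
  also have "\<dots> = {S\<in>partial_block_sets p m (p * i). [\<Sum>S = r] (mod p)} \<union> {S\<in>B. [\<Sum>S = r] (mod p)}"
    unfolding subsets_eq_partial_block_sets_Un_block_unions[OF p] B_def by blast
  finally have "subset_sum_count (p * m) (p * i) p r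
      = card ({S\<in>partial_block_sets p m (p * i). [\<Sum>S = r] (mod p)} \<union> {S\<in>B. [\<Sum>S = r] (mod p)})"
    by (simp add: subset_sum_count_def)
  also have "\<dots> = card {S\<in>partial_block_sets p m (p * i). [\<Sum>S = r] (mod p)} + card {S\<in>B. [\<Sum>S = r] (mod p)}"
  proof (rule card_Un_disjoint)
    show "finite {S\<in>partial_block_sets p m (p * i). [\<Sum>S = r] (mod p)}"
      by (simp add: partial_block_sets_def finite_subsets_lessThan)
    show "finite {S\<in>B. [\<Sum>S = r] (mod p)}"
      by (simp add: B_def finite_subsets_lessThan)
    show "{S\<in>partial_block_sets p m (p * i). [\<Sum>S = r] (mod p)} \<inter> {S\<in>B. [\<Sum>S = r] (mod p)} = {}"
      using block_union_notin_partial_block_sets[OF p] by (auto simp: B_def)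
  qed
  finally show ?thesis
    using card_block_unions_sum_cong[OF p, of m i r] by (simp add: B_def)
qed

section \<open>Prime block length\<close>

lemma subset_sum_count_prime_blocks:
  assumes p: "prime p"
  shows "p * subset_sum_count (p * m) (p * i) p r + (m choose i)
    = ((p * m) choose (p * i)) + (if [r = i * (\<Sum>t<p. t)] (mod p) then p * (m choose i) else 0)"
proof -
  have p0: "0 < p"
    using p by (rule prime_gt_0_nat)
  define X where "X = partial_block_sets p m (p * i)"
  have unit: "gcd c p dvd 1" if "0 < c" "c < p" for c
  proof -
    have "coprime p c"
      using p that by (intro prime_imp_coprime) (auto dest: dvd_imp_le)
    then show ?thesis
      by (simp add: coprime_commute)
  qed
  have uniform: "card {S\<in>X. [\<Sum>S = s] (mod p)} = card {S\<in>X. [\<Sum>S = r] (mod p)}" for s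
    using partial_block_sets_shift[OF p0 unit, of m "p * i" 0 s]
      partial_block_sets_shift[OF p0 unit, of m "p * i" 0 r]
    by (simp add: X_def)
  have "card X = (\<Sum>s | s < p \<and> [s = 0] (mod 1). card {S\<in>X. [\<Sum>S = s] (mod p)})"
    using card_cong_fibres_sum[of X p 1 Sum 0] p0
    by (simp add: X_def partial_block_sets_def finite_subsets_lessThan)
  also have "\<dots> = (\<Sum>s | s < p \<and> [s = 0] (mod 1). card {S\<in>X. [\<Sum>S = r] (mod p)})"
    by (intro sum.cong refl uniform)
  also have "\<dots> = p * card {S\<in>X. [\<Sum>S = r] (mod p)}"
    by simp
  finally have "card X = p * card {S\<in>X. [\<Sum>S = r] (mod p)}" .
  then show ?thesis
    using subset_sum_count_blocks[OF p0, of m i r] card_partial_block_sets[OF p0, of m i]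
    by (simp add: X_def algebra_simps)
qed

lemma of_nat_Pplus_prime_gcd:
  fixes p m i l :: nat
  assumes p: "prime p" and mi: "coprime m i" "0 < m" "0 < i"
  shows "(of_nat (Pplus (p * m) (p * i) l) :: rat)
    = (of_nat ((p * m - 1) choose (p * i - 1)) - of_nat ((m - 1) choose (i - 1))) / of_nat (p * i)
      + (if [l = i * (\<Sum>t<p. t)] (mod p) then of_nat ((m - 1) choose (i - 1)) / of_nat i else 0)"
proof -
  have p0: "0 < p"
    using p by (rule prime_gt_0_nat)
  define N where "N = subset_sum_count (p * m) (p * i) (p * m) l"
  define Y where "Y = (p * m - 1) choose (p * i - 1)"
  define Z where "Z = (m - 1) choose (i - 1)"
  define c where "c = [l = i * (\<Sum>t<p. t)] (mod p)"
  have "gcd (p * m) (p * i) = p"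
    using mi by (simp add: gcd_mult_distrib_nat[symmetric])
  then have "subset_sum_count (p * m) (p * i) p l = m * N"
    using subset_sum_count_gcd_modulus[of "p * m" "p * i" l] p0 mi by (simp add: N_def)
  then have count: "p * m * N + (m choose i) = ((p * m) choose (p * i)) + (if c then p * (m choose i) else 0)"
    using subset_sum_count_prime_blocks[OF p, of m i l] by (simp add: c_def mult.assoc)
  have "p * (i * ((p * m) choose (p * i))) = p * (m * Y)"
    using times_binomial_minus1_eq[of "p * i" "p * m"] p0 mi(3) by (simp add: Y_def mult.assoc)
  then have absorb_nk: "i * ((p * m) choose (p * i)) = m * Y"
    using p0 by simp
  have absorb_mi: "i * (m choose i) = m * Z"
    using times_binomial_minus1_eq[OF mi(3)] by (simp add: Z_def)
  have "m * (p * i * N + Z) = i * (p * m * N + (m choose i))"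
    by (simp add: absorb_mi algebra_simps)
  also have "\<dots> = i * ((p * m) choose (p * i)) + (if c then p * (i * (m choose i)) else 0)"
    using count by (cases c) (simp_all add: algebra_simps)
  also have "\<dots> = m * (Y + (if c then p * Z else 0))"
    unfolding absorb_nk absorb_mi by (simp add: algebra_simps)
  finally have "p * i * N + Z = Y + (if c then p * Z else 0)"
    using mi(2) by simp
  then have "of_nat p * of_nat i * of_nat N + of_nat Z = of_nat Y + (if c then of_nat p * of_nat Z else (0 :: rat))"
    by (metis (mono_tags, lifting) of_nat_add of_nat_mult of_nat_0)
  then have "of_nat N = (of_nat Y - of_nat Z) / of_nat (p * i) + (if c then of_nat Z / of_nat i else (0 :: rat))"
    using p0 mi(3) by (cases c) (simp_all add: field_simps)
  then show ?thesis
    by (simp add: N_def Y_def Z_def c_def Pplus_eq_subset_sum_count)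
qed

section \<open>Four-element subsets\<close>

lemma sum_lessThan_4_filter_mod_2:
  "(\<Sum>s | s < 4 \<and> [s = r] (mod 2). f s) = (\<Sum>s<4::nat. if [s = r] (mod 2) then f s else (0::nat))"
proof -
  have "(\<Sum>s | s < 4 \<and> [s = r] (mod 2). f s) = sum f {s \<in> {..<4}. [s = r] (mod 2)}"
    by (rule sum.cong) auto
  also have "\<dots> = (\<Sum>s<4::nat. if [s = r] (mod 2) then f s else 0)"
    by (rule sum.inter_filter) simp
  finally show ?thesis .
qed

lemma subset_sum_count_four_subsets:
  fixes m :: nat
  assumes m: "0 < m"
  defines "a \<equiv> subset_sum_count (4 * m) 4 4"
  shows "4 * a 0 + 2 * m = ((4 * m) choose 4) + ((2 * m) choose 2)"
    and "4 * a 1 + ((2 * m) choose 2) = (4 * m) choose 4"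
    and "a 3 = a 1"
    and "a 2 = a 0 + m"
proof -
  define F where "F r = card {S\<in>partial_block_sets 4 m (4 * 1). [\<Sum>S = r] (mod 4)}" for r
  have blocks: "a r = F r + (if [r = 1 * (\<Sum>t<4. t)] (mod 4) then m choose 1 else 0)" for r
    using subset_sum_count_blocks[of 4 m 1 r] by (simp add: a_def F_def)
  have "gcd c 4 dvd 2" if "0 < c" "c < 4" for c :: nat
  proof -
    have "c = 1 \<or> c = 2 \<or> c = 3"
      using that by arith
    then show ?thesis
      by (elim disjE) (simp_all add: gcd_non_0_nat)
  qed
  then have "F 0 = F 2"
    using partial_block_sets_shift[of 4 2 m "4 * 1" 0 1] unfolding F_def by (simp add: numeral_2_eq_2)
  moreover have "(\<Sum>t<4::nat. t) = 6"
    by (simp add: lessThan_nat_numeral)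
  ultimately show a2: "a 2 = a 0 + m"
    using blocks[of 0] blocks[of 2] by (simp add: cong_def)
  show a3: "a 3 = a 1"
    unfolding a_def by (rule subset_sum_count_reflect) (simp add: cong_def)
  have by_parity: "2 * subset_sum_count (4 * m) 4 2 r + ((2 * m) choose 2)
      = ((4 * m) choose 4) + (if [r = 2 * 1] (mod 2) then 2 * ((2 * m) choose 2) else 0)" for r
    using subset_sum_count_prime_blocks[of 2 "2 * m" 2 r] by (simp add: lessThan_nat_numeral)
  have "subset_sum_count (4 * m) 4 2 r = (\<Sum>s<4. if [s = r] (mod 2) then a s else 0)" for r
    unfolding a_def sum_lessThan_4_filter_mod_2[symmetric]
    by (rule subset_sum_count_dvd_modulus) simp_all
  then have even: "subset_sum_count (4 * m) 4 2 0 = a 0 + a 2"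
    and odd: "subset_sum_count (4 * m) 4 2 1 = a 1 + a 3"
    by (simp_all add: lessThan_nat_numeral cong_def)
  show "4 * a 0 + 2 * m = ((4 * m) choose 4) + ((2 * m) choose 2)"
    using by_parity[of 0] even a2 by (simp add: cong_def)
  show "4 * a 1 + ((2 * m) choose 2) = (4 * m) choose 4"
    using by_parity[of 1] odd a3 by (simp add: cong_def)
qed

lemma of_nat_subset_sum_count_four_subsets:
  fixes m r :: nat
  assumes m: "0 < m"
  defines "Y \<equiv> (of_nat ((4 * m - 1) choose 3) :: rat)"
  shows "of_nat (subset_sum_count (4 * m) 4 4 r) = of_nat m *
    (if r mod 4 = 0 then (Y + 2 * of_nat m - 3) / 4
     else if odd r then (Y - 2 * of_nat m + 1) / 4
     else (Y + 2 * of_nat m + 1) / 4)"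
proof -
  define a where "a = subset_sum_count (4 * m) 4 4"
  have "4 * ((4 * m) choose 4) = 4 * m * ((4 * m - 1) choose 3)"
    using times_binomial_minus1_eq[of 4 "4 * m"] by simp
  then have C: "of_nat ((4 * m) choose 4) = of_nat m * Y"
    unfolding Y_def by (simp add: mult.assoc)
  have "2 * ((2 * m) choose 2) = 2 * m * (2 * m - 1)"
    using times_binomial_minus1_eq[of 2 "2 * m"] by simp
  then have B: "of_nat ((2 * m) choose 2) = of_nat m * (2 * of_nat m - 1 :: rat)"
    using m by (simp add: of_nat_diff)
  note counts = subset_sum_count_four_subsets[OF m, folded a_def]
  have a0: "of_nat (a 0) = of_nat m * (Y + 2 * of_nat m - 3) / (4 :: rat)"
    using arg_cong[OF counts(1), of "of_nat :: nat \<Rightarrow> rat"] C B by (simp add: field_simps)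
  have a1: "of_nat (a 1) = of_nat m * (Y - 2 * of_nat m + 1) / (4 :: rat)"
    using arg_cong[OF counts(2), of "of_nat :: nat \<Rightarrow> rat"] C B by (simp add: field_simps)
  have a2: "of_nat (a 2) = of_nat m * (Y + 2 * of_nat m + 1) / (4 :: rat)"
    using a0 counts(4) by (simp add: field_simps)
  have a_mod: "a r = a (r mod 4)"
    by (simp add: a_def subset_sum_count_def cong_def)
  consider "r mod 4 = 0" | "r mod 4 = 1" | "r mod 4 = 2" | "r mod 4 = 3"
    by arith
  then show ?thesis
  proof cases
    case 1
    then show ?thesis using a0 a_mod by (simp add: a_def)
  next
    case 2
    moreover have "odd r" using 2 by presburger
    ultimately show ?thesis using a1 a_mod by (simp add: a_def)
  next
    case 3
    moreover have "even r" using 3 by presburger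
    ultimately show ?thesis using a2 a_mod by (simp add: a_def)
  next
    case 4
    moreover have "odd r" using 4 by presburger
    ultimately show ?thesis using a1 counts(3) a_mod by (simp add: a_def)
  qed
qed

lemma of_nat_Pplus_four_subsets:
  fixes m l :: nat
  assumes m: "0 < m"
  defines "Y \<equiv> (of_nat ((4 * m - 1) choose 3) :: rat)"
  shows "of_nat (Pplus (4 * m) 4 l) =
    (if l mod 4 = 0 then (Y + 2 * of_nat m - 3) / 4
     else if odd l then (Y - 2 * of_nat m + 1) / 4
     else (Y + 2 * of_nat m + 1) / 4)"
proof -
  have "gcd (4 * m) 4 = 4"
    by simp
  then have "subset_sum_count (4 * m) 4 4 l = m * Pplus (4 * m) 4 l"
    using subset_sum_count_gcd_modulus[of "4 * m" 4 l] m by (simp add: Pplus_eq_subset_sum_count)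
  then show ?thesis
    using of_nat_subset_sum_count_four_subsets[OF m, of l] m by (simp add: Y_def)
qed

section \<open>Closed formulas in terms of q\<close>

lemma coprime_3_mult_add:
  fixes t r :: nat
  assumes "r = 1 \<or> r = 2"
  shows "coprime (3 * t + r) 3"
proof -
  have "gcd 3 (t * 3 + r) = 1"
    using assms gcd_red_nat[of 3 2] by (auto simp only: gcd_add_mult) simp_all
  then show ?thesis
    by (simp add: coprime_iff_gcd_eq_1 gcd.commute mult.commute)
qed

lemma Pplus_3_subsets_q_1_mod_3:
  fixes q lam :: nat
  assumes "q mod 3 = 1" "1 < q"
  shows "(of_nat (Pplus (q - 1) 3 lam) :: rat) =
    (if lam mod 3 = 0 then (of_nat ((q - 2) choose 2) - 1) / 3 + 1
     else (of_nat ((q - 2) choose 2) - 1) / 3)"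
proof -
  define t where "t = q div 3"
  have "q = 3 * t + 1"
    using div_mult_mod_eq[of q 3] assms(1) unfolding t_def by linarith
  then have q: "q - 1 = 3 * t" "q - 2 = 3 * t - 1" "0 < t"
    using assms(2) by linarith+
  have "(\<Sum>t<3::nat. t) = 3"
    by (simp add: lessThan_nat_numeral)
  then show ?thesis
    using of_nat_Pplus_prime_gcd[of 3 t 1 lam] q(3) unfolding q(1,2) by (simp add: cong_def)
qed

lemma Pplus_4_subsets_q_3_mod_4:
  fixes q lam :: nat
  assumes "q mod 4 = 3"
  shows "(of_nat (Pplus (q - 1) 4 lam) :: rat) =
    (if lam mod 2 = 0 then (of_nat ((q - 2) choose 3) + (of_nat q - 3) / 2) / 4
     else (of_nat ((q - 2) choose 3) - (of_nat q - 3) / 2) / 4)"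
proof -
  define t where "t = q div 4"
  have q: "q = 4 * t + 3"
    using div_mult_mod_eq[of q 4] assms unfolding t_def by linarith
  then have "q - 1 = 2 * (2 * t + 1)" "q - 2 = 2 * (2 * t + 1) - 1"
    by auto
  moreover have "(\<Sum>t<2::nat. t) = 1"
    by (simp add: lessThan_nat_numeral)
  ultimately show ?thesis
    using of_nat_Pplus_prime_gcd[of 2 "2 * t + 1" 2 lam] unfolding q
    by (cases "lam mod 2 = 0") (simp_all add: cong_def field_simps)
qed

lemma Pplus_5_subsets_q_1_mod_5:
  fixes q lam :: nat
  assumes "q mod 5 = 1" "1 < q"
  shows "(of_nat (Pplus (q - 1) 5 lam) :: rat) =
    (if lam mod 5 = 0 then (of_nat ((q - 2) choose 4) - 1) / 5 + 1
     else (of_nat ((q - 2) choose 4) - 1) / 5)"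
proof -
  define t where "t = q div 5"
  have "q = 5 * t + 1"
    using div_mult_mod_eq[of q 5] assms(1) unfolding t_def by linarith
  then have q: "q - 1 = 5 * t" "q - 2 = 5 * t - 1" "0 < t"
    using assms(2) by linarith+
  have "(\<Sum>t<5::nat. t) = 10"
    by (simp add: lessThan_nat_numeral)
  then show ?thesis
    using of_nat_Pplus_prime_gcd[of 5 t 1 lam] q(3) unfolding q(1,2) by (simp add: cong_def)
qed

lemma Pplus_6_subsets_q_3_or_5_mod_6:
  fixes q lam :: nat
  assumes "q mod 6 = 3 \<or> q mod 6 = 5"
  shows "(of_nat (Pplus (q - 1) 6 lam) :: rat) =
    (if lam mod 2 = 0
     then (of_nat ((q - 2) choose 5) - of_nat (((q - 3) div 2) choose 2)) / 6
     else (of_nat ((q - 2) choose 5) + of_nat (((q - 3) div 2) choose 2)) / 6)"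
proof -
  obtain r where r: "r = 1 \<or> r = 2" "q = 6 * (q div 6) + 2 * r + 1"
  proof (cases "q mod 6 = 3")
    case True
    then have "q = 6 * (q div 6) + 2 * 1 + 1"
      using div_mult_mod_eq[of q 6] by linarith
    then show ?thesis
      by (rule that[rotated]) simp
  next
    case False
    then have "q mod 6 = 5"
      using assms by auto
    then have "q = 6 * (q div 6) + 2 * 2 + 1"
      using div_mult_mod_eq[of q 6] by linarith
    then show ?thesis
      by (rule that[rotated]) simp
  qed
  define m where "m = 3 * (q div 6) + r"
  have q_eq: "q = 2 * m + 1"
    using r(2) unfolding m_def by (simp add: algebra_simps)
  have "0 < m"
    using r(1) unfolding m_def by auto
  then have "q - 3 = 2 * (m - 1)"
    using q_eq by auto
  with q_eq have q: "q - 1 = 2 * m" "q - 2 = 2 * m - 1" "(q - 3) div 2 = m - 1"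
    by simp_all
  have "coprime m 3"
    unfolding m_def using r(1) by (rule coprime_3_mult_add)
  moreover have "(\<Sum>t<2::nat. t) = 1"
    by (simp add: lessThan_nat_numeral)
  ultimately show ?thesis
    using of_nat_Pplus_prime_gcd[of 2 m 3 lam] \<open>0 < m\<close> unfolding q
    by (cases "lam mod 2 = 0") (simp_all add: cong_def field_simps)
qed

lemma Pplus_6_subsets_q_4_mod_6:
  fixes q lam :: nat
  assumes "q mod 6 = 4"
  shows "(of_nat (Pplus (q - 1) 6 lam) :: rat) =
    (if lam mod 3 = 0
     then (of_nat ((q - 2) choose 5) / 2 + (of_nat q - 4) / 3) / 3
     else (of_nat ((q - 2) choose 5) - (of_nat q - 4) / 3) / 6)"
proof -
  define t where "t = q div 6"
  have q: "q = 6 * t + 4"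
    using div_mult_mod_eq[of q 6] assms unfolding t_def by linarith
  then have "q - 1 = 3 * (2 * t + 1)" "q - 2 = 3 * (2 * t + 1) - 1"
    by auto
  moreover have "(\<Sum>t<3::nat. t) = 3"
    by (simp add: lessThan_nat_numeral)
  ultimately show ?thesis
    using of_nat_Pplus_prime_gcd[of 3 "2 * t + 1" 2 lam] unfolding q
    by (cases "lam mod 3 = 0") (simp_all add: cong_def field_simps)
qed

lemma Pplus_7_subsets_q_1_mod_7:
  fixes q lam :: nat
  assumes "q mod 7 = 1" "1 < q"
  shows "(of_nat (Pplus (q - 1) 7 lam) :: rat) =
    (if lam mod 7 = 0 then (of_nat ((q - 2) choose 6) - 1) / 7 + 1
     else (of_nat ((q - 2) choose 6) - 1) / 7)"
proof -
  define t where "t = q div 7"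
  have "q = 7 * t + 1"
    using div_mult_mod_eq[of q 7] assms(1) unfolding t_def by linarith
  then have q: "q - 1 = 7 * t" "q - 2 = 7 * t - 1" "0 < t"
    using assms(2) by linarith+
  have "(\<Sum>t<7::nat. t) = 21"
    by (simp add: lessThan_nat_numeral)
  then show ?thesis
    using of_nat_Pplus_prime_gcd[of 7 t 1 lam] q(3) unfolding q(1,2) by (simp add: cong_def)
qed

lemma Pplus_8_subsets_q_3_mod_4:
  fixes q lam :: nat
  assumes "q mod 4 = 3"
  shows "(of_nat (Pplus (q - 1) 8 lam) :: rat) =
    (if lam mod 2 = 0
     then (of_nat ((q - 2) choose 7) + of_nat (((q - 3) div 2) choose 3)) / 8
     else (of_nat ((q - 2) choose 7) - of_nat (((q - 3) div 2) choose 3)) / 8)"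
proof -
  define t where "t = q div 4"
  have "q = 4 * t + 3"
    using div_mult_mod_eq[of q 4] assms unfolding t_def by linarith
  then have q: "q - 1 = 2 * (2 * t + 1)" "q - 2 = 2 * (2 * t + 1) - 1" "(q - 3) div 2 = 2 * t"
    by simp_all
  have "coprime (2 * t + 1) 4"
    using coprime_mult_right_iff[of "2 * t + 1" 2 2] by simp
  moreover have "(\<Sum>t<2::nat. t) = 1"
    by (simp add: lessThan_nat_numeral)
  ultimately show ?thesis
    using of_nat_Pplus_prime_gcd[of 2 "2 * t + 1" 4 lam] unfolding q
    by (cases "lam mod 2 = 0") (simp_all add: cong_def field_simps)
qed

lemma Pplus_9_subsets_q_4_or_7_mod_9:
  fixes q lam :: nat
  assumes "q mod 9 = 4 \<or> q mod 9 = 7"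
  shows "(of_nat (Pplus (q - 1) 9 lam) :: rat) =
    (if lam mod 3 = 0
     then (of_nat ((q - 2) choose 8) + 2 * of_nat (((q - 4) div 3) choose 2)) / 9
     else (of_nat ((q - 2) choose 8) - of_nat (((q - 4) div 3) choose 2)) / 9)"
proof -
  obtain r where r: "r = 1 \<or> r = 2" "q = 9 * (q div 9) + 3 * r + 1"
  proof (cases "q mod 9 = 4")
    case True
    then have "q = 9 * (q div 9) + 3 * 1 + 1"
      using div_mult_mod_eq[of q 9] by linarith
    then show ?thesis
      by (rule that[rotated]) simp
  next
    case False
    then have "q mod 9 = 7"
      using assms by auto
    then have "q = 9 * (q div 9) + 3 * 2 + 1"
      using div_mult_mod_eq[of q 9] by linarith
    then show ?thesis
      by (rule that[rotated]) simp
  qed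
  define m where "m = 3 * (q div 9) + r"
  have q_eq: "q = 3 * m + 1"
    using r(2) unfolding m_def by (simp add: algebra_simps)
  have "0 < m"
    using r(1) unfolding m_def by auto
  then have "q - 4 = 3 * (m - 1)"
    using q_eq by auto
  with q_eq have q: "q - 1 = 3 * m" "q - 2 = 3 * m - 1" "(q - 4) div 3 = m - 1"
    by simp_all
  have "coprime m 3"
    unfolding m_def using r(1) by (rule coprime_3_mult_add)
  moreover have "(\<Sum>t<3::nat. t) = 3"
    by (simp add: lessThan_nat_numeral)
  ultimately show ?thesis
    using of_nat_Pplus_prime_gcd[of 3 m 3 lam] \<open>0 < m\<close> unfolding q
    by (cases "lam mod 3 = 0") (simp_all add: cong_def field_simps)
qed

lemma Pplus_4_subsets_q_1_mod_4:
  fixes q lam :: nat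
  assumes "q mod 4 = 1" "1 < q"
  shows "(of_nat (Pplus (q - 1) 4 lam) :: rat) =
    (if lam mod 4 = 0 then (of_nat ((q - 2) choose 3) + (of_nat q - 7) / 2) / 4
     else if lam mod 2 = 1 then (of_nat ((q - 2) choose 3) - (of_nat q - 3) / 2) / 4
     else (of_nat ((q - 2) choose 3) + (of_nat q + 1) / 2) / 4)"
proof -
  define m where "m = q div 4"
  have q: "q = 4 * m + 1"
    using div_mult_mod_eq[of q 4] assms(1) unfolding m_def by linarith
  then have "q - 1 = 4 * m" "q - 2 = 4 * m - 1" "0 < m"
    using assms(2) by linarith+
  then show ?thesis
    using of_nat_Pplus_four_subsets[of m lam] unfolding q
    by (simp add: odd_iff_mod_2_eq_one field_simps)
qed

theorem theorem5p2:
  fixes V :: "('a::{finite,field} option \<Rightarrow> 'a) set"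
    and d :: nat and j1 j2 :: "'a option" and \<gamma>1 \<gamma>2 \<beta> :: 'a and lam :: nat
  defines "q \<equiv> CARD('a)"
  defines "\<gamma> \<equiv> - \<gamma>2 / \<gamma>1"
  defines "P \<equiv> (of_nat (Pplus (q - 1) (d - 2) lam) :: rat)"
  assumes d5: "d \<ge> 5"
    and coset: "is_coset (gdrs_code d) V"
    and wt2: "coset_weight V = 2"
    and j12: "j1 \<noteq> j2" and g1: "\<gamma>1 \<noteq> 0" and g2: "\<gamma>2 \<noteq> 0"
    and leader: "is_coset_leader (v2 j1 j2 \<gamma>1 \<gamma>2) V"
    and prim: "primitive_elem \<beta>"
    and lam: "lam < q - 1" "\<beta> ^ lam = \<gamma>"
  shows
   "(q mod 3 = 1 \<and> q \<ge> 7 \<and> d = 5 \<longrightarrow>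
      P = (if lam mod 3 = 0 then (of_nat ((q-2) choose 2) - 1) / 3 + 1
           else (of_nat ((q-2) choose 2) - 1) / 3))
  \<and> (q mod 4 = 3 \<and> q \<ge> 7 \<and> d = 6 \<longrightarrow>
      P = (if lam mod 2 = 0 then (of_nat ((q-2) choose 3) + (of_nat q - 3) / 2) / 4
           else (of_nat ((q-2) choose 3) - (of_nat q - 3) / 2) / 4))
  \<and> (q mod 5 = 1 \<and> q \<ge> 11 \<and> d = 7 \<longrightarrow>
      P = (if lam mod 5 = 0 then (of_nat ((q-2) choose 4) - 1) / 5 + 1
           else (of_nat ((q-2) choose 4) - 1) / 5))
  \<and> (((q mod 6 = 3 \<and> q \<ge> 9) \<or> (q mod 6 = 5 \<and> q \<ge> 11)) \<and> d = 8 \<longrightarrow>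
      P = (if lam mod 2 = 0
           then (of_nat ((q-2) choose 5) - of_nat (((q-3) div 2) choose 2)) / 6
           else (of_nat ((q-2) choose 5) + of_nat (((q-3) div 2) choose 2)) / 6))
  \<and> (q mod 6 = 4 \<and> q \<ge> 10 \<and> d = 8 \<longrightarrow>
      P = (if lam mod 3 = 0
           then (of_nat ((q-2) choose 5) / 2 + (of_nat q - 4) / 3) / 3
           else (of_nat ((q-2) choose 5) - (of_nat q - 4) / 3) / 6))
  \<and> (q mod 7 = 1 \<and> q \<ge> 29 \<and> d = 9 \<longrightarrow>
      P = (if lam mod 7 = 0 then (of_nat ((q-2) choose 6) - 1) / 7 + 1
           else (of_nat ((q-2) choose 6) - 1) / 7))
  \<and> (q mod 4 = 3 \<and> q \<ge> 11 \<and> d = 10 \<longrightarrow>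
      P = (if lam mod 2 = 0
           then (of_nat ((q-2) choose 7) + of_nat (((q-3) div 2) choose 3)) / 8
           else (of_nat ((q-2) choose 7) - of_nat (((q-3) div 2) choose 3)) / 8))
  \<and> (((q mod 9 = 4 \<and> q \<ge> 13) \<or> (q mod 9 = 7 \<and> q \<ge> 16)) \<and> d = 11 \<longrightarrow>
      P = (if lam mod 3 = 0
           then (of_nat ((q-2) choose 8) + 2 * of_nat (((q-4) div 3) choose 2)) / 9
           else (of_nat ((q-2) choose 8) - of_nat (((q-4) div 3) choose 2)) / 9))
  \<and> (q mod 4 = 1 \<and> q \<ge> 9 \<and> d = 6 \<longrightarrow>
      P = (if lam mod 4 = 0 then (of_nat ((q-2) choose 3) + (of_nat q - 7) / 2) / 4
           else if lam mod 2 = 1 then (of_nat ((q-2) choose 3) - (of_nat q - 3) / 2) / 4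
           else (of_nat ((q-2) choose 3) + (of_nat q + 1) / 2) / 4))"
proof -
  \<comment> \<open>P is a purely combinatorial quantity.\<close>
  show ?thesis
    unfolding P_def
    using Pplus_3_subsets_q_1_mod_3[of q lam] Pplus_4_subsets_q_3_mod_4[of q lam]
      Pplus_5_subsets_q_1_mod_5[of q lam] Pplus_6_subsets_q_3_or_5_mod_6[of q lam]
      Pplus_6_subsets_q_4_mod_6[of q lam] Pplus_7_subsets_q_1_mod_7[of q lam]
      Pplus_8_subsets_q_3_mod_4[of q lam] Pplus_9_subsets_q_4_or_7_mod_9[of q lam]
      Pplus_4_subsets_q_1_mod_4[of q lam]
    by (intro conjI impI) auto
qed

end
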